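(* Let $n$ be a nonnegative integer, let $f_n(z),g_n(z)\in\mathbb{C}[z]$ be polynomials of length $\ell$ (i.e., of degree $\ell-1$), let $\sigma_n,\tau_n\in\{-1,1\}$, and let $f_{n+1}(z)=f_n(z)+\sigma_n z^\ell f_n^\dagger(-z)$ and $g_{n+1}(z)=g_n(z)+\tau_n z^\ell g_n^\dagger(-z)$. Then $\|f_{n+1}\|_2^2=2\|f_n\|_2^2$ and $\|g_{n+1}\|_2^2=2\|g_n\|_2^2$. Moreover, if for $j\in\{n,n+1\}$ we set \[ u_j=\|f_jg_j\|_2^2,\qquad v_j=\|f_j\widetilde{g}_j\|_2^2,\qquad w_j=\operatorname{Re}\int f_j\widetilde{f}_j\overline{g_j\widetilde{g}_j}, \] then \begin{enumerate} \item $u_{n+1}=2u_n+2v_n+2\sigma_n\tau_n w_n$, \item $v_{n+1}=2u_n+2v_n-2\sigma_n\tau_n w_n$, \item $w_{n+1}=2\sigma_n\tau_n u_n-2\sigma_n\tau_n v_n+2w_n$. \end{enumerate}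
   Context: For a polynomial $a(z)=a_0+\cdots+a_dz^d$ of degree $d$, its length is $1+d$ and $a^\dagger(z)=\overline{a_d}+\overline{a_{d-1}}z+\cdots+\overline{a_0}z^d$; $f_n^\dagger(-z)$ means $f_n^\dagger$ evaluated at $-z$. For a Laurent polynomial $a(z)=\sum_ja_jz^j$: $\widetilde{a}(z)=a(-z)$, $\overline{a(z)}=\sum_j\overline{a_j}z^{-j}$, $\int a$ is the constant coefficient $a_0$ (equivalently $\frac{1}{2\pi}\int_0^{2\pi}a(e^{i\theta})d\theta$), and $\|a\|_p=\left(\frac{1}{2\pi}\int_0^{2\pi}|a(e^{i\theta})|^pd\theta\right)^{1/p}$. *)

theory Defs
  imports "HOL-Analysis.Analysis" "HOL-Computational_Algebra.Polynomial"
begin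

definition plen :: "complex poly \<Rightarrow> nat" where
  "plen p = length (coeffs p)"

definition dagger :: "complex poly \<Rightarrow> complex poly" where
  "dagger a = reflect_poly (map_poly cnj a)"

definition tilde :: "complex poly \<Rightarrow> complex poly" where
  "tilde a = a \<circ>\<^sub>p [:0, -1:]"

text \<open>Normalised integral over the unit circle (= constant coefficient for Laurent polynomials).\<close>
definition circ_int :: "(complex \<Rightarrow> complex) \<Rightarrow> complex" where
  "circ_int F = integral {0..2*pi} (\<lambda>t. F (cis t)) / complex_of_real (2*pi)"

definition l2norm :: "complex poly \<Rightarrow> real" where
  "l2norm a = sqrt ((1 / (2*pi)) * integral {0..2*pi} (\<lambda>t. (cmod (poly a (cis t)))^2))"

end

theory Submission
  imports Defs
begin

text \<open>On the unit circle put a = f(z), c = f(-z), b = g(z), d = g(-z) and e = z^l (-z)^(l-1), a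
  unimodular odd function of z. Then f(n+1) takes the values a + \<sigma> e cnj(c) at z and
  c - \<sigma> e cnj(a) at -z, and similarly for g(n+1). Since z \<mapsto> -z preserves the mean over the circle,
  each quantity for n + 1 may be averaged over the pair z, -z, where its integrand is an explicit
  polynomial in a, b, c, d, e and their conjugates. Its terms are those of the quantities for n,
  apart from a multiple of Re(cnj(e)^2 a b c d) = Re(cnj(z)^(4l-2) P(z)) with deg P \<le> 4l - 4, whose
  mean vanishes because it has only negative frequencies.\<close>

definition circle_mean :: "(complex \<Rightarrow> real) \<Rightarrow> real" where
  "circle_mean \<phi> = integral {0..2*pi} (\<lambda>t. \<phi> (cis t)) / (2*pi)"

lemma integrable_on_cis_compose:
  fixes \<phi> :: "complex \<Rightarrow> 'a::banach"
  assumes "continuous_on UNIV \<phi>"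
  shows "(\<lambda>t. \<phi> (cis t)) integrable_on {a..b}"
  by (intro integrable_continuous_real continuous_on_compose2[OF assms] continuous_intros) auto

lemma circle_mean_add:
  assumes "continuous_on UNIV \<phi>" "continuous_on UNIV \<psi>"
  shows "circle_mean (\<lambda>z. \<phi> z + \<psi> z) = circle_mean \<phi> + circle_mean \<psi>"
  unfolding circle_mean_def
  by (simp add: integral_add integrable_on_cis_compose assms add_divide_distrib)

lemma circle_mean_cmult: "circle_mean (\<lambda>z. c * \<phi> z) = c * circle_mean \<phi>"
  unfolding circle_mean_def by simp

lemma circle_mean_lincomb3:
  assumes "continuous_on UNIV \<phi>" "continuous_on UNIV \<psi>" "continuous_on UNIV \<eta>"
  shows "circle_mean (\<lambda>z. \<alpha> * \<phi> z + \<beta> * \<psi> z + \<gamma> * \<eta> z) =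
    \<alpha> * circle_mean \<phi> + \<beta> * circle_mean \<psi> + \<gamma> * circle_mean \<eta>"
  by (simp add: circle_mean_add circle_mean_cmult assms continuous_intros)

lemma circle_mean_cong:
  assumes "\<And>z. cmod z = 1 \<Longrightarrow> \<phi> z = \<psi> z"
  shows "circle_mean \<phi> = circle_mean \<psi>"
  unfolding circle_mean_def by (simp add: assms)

lemma circle_mean_reflect:
  assumes "continuous_on UNIV \<phi>"
  shows "circle_mean (\<lambda>z. \<phi> (- z)) = circle_mean \<phi>"
proof -
  define \<psi> where "\<psi> t = \<phi> (cis t)" for t
  have int: "\<psi> integrable_on {a..b}" for a b
    unfolding \<psi>_def by (rule integrable_on_cis_compose[OF assms])
  have periodic: "\<psi> (2*pi + t) = \<psi> t" for t
    unfolding \<psi>_def by (simp add: cis.ctr cos_add sin_add)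
  have "integral {0..2*pi} (\<lambda>t. \<phi> (- cis t)) = integral {0..2*pi} (\<psi> \<circ> (+) pi)"
    using cis_mult[of pi] by (simp add: \<psi>_def o_def)
  also have "\<dots> = integral {pi..2*pi} \<psi> + integral {2*pi..3*pi} \<psi>"
    using integral_shift_Icc_real[of 0 "2*pi" \<psi> pi] int
      Henstock_Kurzweil_Integration.integral_combine[where a=pi and c="2*pi" and b="3*pi" and f=\<psi>]
    by simp
  also have "integral {2*pi..3*pi} \<psi> = integral {0..pi} \<psi>"
    using integral_shift_Icc_real[of 0 pi \<psi> "2*pi"] by (simp add: o_def periodic)
  also have "integral {pi..2*pi} \<psi> + integral {0..pi} \<psi> = integral {0..2*pi} \<psi>"
    using Henstock_Kurzweil_Integration.integral_combine[where a=0 and c=pi and b="2*pi" and f=\<psi>] int by simp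
  finally show ?thesis
    unfolding circle_mean_def \<psi>_def by simp
qed

lemma has_integral_cis_multiple:
  fixes j :: int
  assumes "j \<noteq> 0"
  shows "((\<lambda>t. cis (j * t)) has_integral 0) {0..2*pi}"
proof -
  have "((\<lambda>t. cis (j * t) / (\<i> * j)) has_vector_derivative cis (j * t)) (at t within {0..2*pi})"
    for t :: real
  proof -
    have "((\<lambda>t. cis (j * t)) has_derivative (\<lambda>h. h *\<^sub>R (\<i> * j * cis (j * t)))) (at t within {0..2*pi})"
      by (rule has_derivative_eq_rhs[OF has_derivative_cis[OF has_derivative_mult_right[OF has_derivative_ident]]])
        (simp add: fun_eq_iff scaleR_conv_of_real)
    then show ?thesis
      using assms by (auto simp: has_vector_derivative_def fun_eq_iff scaleR_conv_of_real field_simps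
        intro!: derivative_eq_intros)
  qed
  from fundamental_theorem_of_calculus[OF _ this]
  show ?thesis
    using cis_multiple_2pi[of "of_int j"] by (simp add: mult.commute)
qed

lemma circle_mean_Re_cnj_power_mult_poly:
  assumes "degree P < m"
  shows "circle_mean (\<lambda>z. Re (cnj z ^ m * poly P z)) = 0"
proof -
  have expand: "cnj (cis t) ^ m * poly P (cis t) =
      (\<Sum>i\<le>degree P. coeff P i * cis (of_int (int i - int m) * t))" for t
  proof -
    have "cnj (cis t) ^ m * cis t ^ i = cis (of_int (int i - int m) * t)" for i
      by (simp only: cis_cnj Complex.DeMoivre) (simp add: cis_mult algebra_simps)
    then show ?thesis
      by (simp add: poly_altdef sum_distrib_left mult.left_commute)
  qed
  have "((\<lambda>t. \<Sum>i\<le>degree P. coeff P i * cis (of_int (int i - int m) * t))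
      has_integral (\<Sum>i\<le>degree P. coeff P i * 0)) {0..2*pi}"
    by (intro has_integral_sum has_integral_mult_right has_integral_cis_multiple) (use assms in auto)
  from has_integral_linear[OF this[simplified] bounded_linear_Re]
  show ?thesis
    unfolding circle_mean_def by (simp add: expand o_def integral_unique)
qed

lemma circle_mean_eqI:
  assumes "\<And>z. cmod z = 1 \<Longrightarrow> \<phi> z + \<phi> (- z) = \<psi> z + \<psi> (- z) + c * Re (cnj z ^ m * poly P z)"
    and "continuous_on UNIV \<phi>" "continuous_on UNIV \<psi>" "degree P < m"
  shows "circle_mean \<phi> = circle_mean \<psi>"
proof -
  have cont: "continuous_on UNIV (\<lambda>z. \<eta> (- z))" if "continuous_on UNIV \<eta>" for \<eta> :: "complex \<Rightarrow> real"
    by (rule continuous_on_compose2[OF that]) (auto intro: continuous_intros)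
  have "2 * circle_mean \<phi> = circle_mean (\<lambda>z. \<phi> z + \<phi> (- z))"
    using circle_mean_add[OF assms(2) cont[OF assms(2)]] circle_mean_reflect[OF assms(2)] by simp
  also have "\<dots> = circle_mean (\<lambda>z. (\<psi> z + \<psi> (- z)) + c * Re (cnj z ^ m * poly P z))"
    by (rule circle_mean_cong) (rule assms(1))
  also have "\<dots> = 2 * circle_mean \<psi>"
    using circle_mean_add[OF assms(3) cont[OF assms(3)]] circle_mean_reflect[OF assms(3)]
      circle_mean_Re_cnj_power_mult_poly[OF assms(4)] circle_mean_cmult[of c]
    by (subst circle_mean_add) (auto intro!: continuous_intros assms(3) cont)
  finally show ?thesis by simp
qed

lemma l2norm_power2_eq_circle_mean: "(l2norm p)^2 = circle_mean (\<lambda>z. (cmod (poly p z))^2)"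
proof -
  have "0 \<le> integral {0..2*pi} (\<lambda>t. (cmod (poly p (cis t)))^2)"
    by (intro integral_nonneg integrable_on_cis_compose continuous_intros) simp
  then show ?thesis
    unfolding l2norm_def circle_mean_def by simp
qed

lemma Re_circ_int_eq_circle_mean:
  assumes "continuous_on UNIV h"
  shows "Re (circ_int h) = circle_mean (\<lambda>z. Re (h z))"
  unfolding circ_int_def circle_mean_def
  using integral_linear[OF integrable_on_cis_compose[OF assms] bounded_linear_Re]
  by (simp add: o_def Re_divide_of_real)

lemma poly_tilde: "poly (tilde p) z = poly p (- z)"
  by (simp add: tilde_def poly_pcompose)

lemma degree_tilde: "degree (tilde p) = degree p"
  by (simp add: tilde_def degree_pcompose)

lemma degree_eq_plen_minus_1: "degree p = plen p - 1"
  by (cases "p = 0") (simp_all add: plen_def length_coeffs_degree)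

lemma poly_dagger_unit_circle:
  assumes "cmod z = 1"
  shows "poly (dagger p) z = z ^ degree p * cnj (poly p z)"
proof -
  have "inverse z = cnj z"
    using assms complex_norm_square[of z] by (simp add: inverse_unique)
  moreover have "z \<noteq> 0" using assms by auto
  ultimately show ?thesis
    unfolding dagger_def by (simp add: poly_reflect_poly_nz degree_map_poly)
qed

definition doubling_step :: "real \<Rightarrow> complex poly \<Rightarrow> complex poly" where
  "doubling_step s p = p + smult (complex_of_real s) (monom 1 (plen p) * tilde (dagger p))"

definition doubling_factor :: "nat \<Rightarrow> complex \<Rightarrow> complex" where
  "doubling_factor l z = z ^ l * (- z) ^ (l - 1)"

lemma doubling_factor_minus: "l \<noteq> 0 \<Longrightarrow> doubling_factor l (- z) = - doubling_factor l z"
  by (cases l) (simp_all add: doubling_factor_def)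

lemma doubling_factor_mult_cnj:
  assumes "cmod z = 1"
  shows "doubling_factor l z * cnj (doubling_factor l z) = 1"
proof -
  have "cmod (doubling_factor l z) = 1"
    using assms by (simp add: doubling_factor_def norm_mult norm_power)
  then show ?thesis
    using complex_norm_square[of "doubling_factor l z"] by simp
qed

lemma cnj_doubling_factor_power2:
  assumes "l \<noteq> 0"
  shows "cnj (doubling_factor l z) ^ 2 = cnj z ^ (4 * l - 2)"
proof -
  obtain k where "l = Suc k" using assms by (cases l) auto
  then have "doubling_factor l z ^ 2 = z ^ (4 * l - 2)"
    by (simp add: doubling_factor_def power_mult_distrib power_mult[symmetric] power_add[symmetric]
        power_minus_even algebra_simps)
  then show ?thesis by (metis complex_cnj_power)
qed

lemma poly_doubling_step:
  assumes "plen p = l" and "cmod z = 1"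
  shows "poly (doubling_step s p) z = poly p z + s * doubling_factor l z * cnj (poly p (- z))"
  using poly_dagger_unit_circle[of "- z" p] assms
  by (simp add: doubling_step_def doubling_factor_def poly_monom poly_tilde degree_eq_plen_minus_1)

lemma poly_doubling_step_minus:
  assumes "plen p = l" and "l \<noteq> 0" and "cmod z = 1"
  shows "poly (doubling_step s p) (- z) = poly p (- z) - s * doubling_factor l z * cnj (poly p z)"
  using poly_doubling_step[of p l "- z" s] assms by (simp add: doubling_factor_minus)

lemma complex_of_real_Re: "complex_of_real (Re w) = (w + cnj w) / 2"
  by (simp add: complex_eq_iff)

lemma complex_of_real_power2_eq_1: "s^2 = 1 \<Longrightarrow> (complex_of_real s)^2 = 1"
  by (metis of_real_eq_1_iff of_real_power)

text \<open>The identities below are proved after mapping both sides into \<open>\<complex>\<close>, where these rewrite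
  rules make them polynomial identities in the variables and their conjugates.\<close>

lemmas complex_of_real_to_cnj = complex_of_real_Re complex_norm_square
  of_real_add of_real_mult of_real_diff of_real_numeral of_real_minus of_real_neg_numeral
  complex_cnj_mult complex_cnj_add complex_cnj_diff complex_cnj_complex_of_real complex_cnj_cnj
  complex_cnj_divide complex_cnj_power complex_cnj_numeral complex_cnj_minus

lemma norm_doubling_identity:
  fixes a c e :: complex and s :: real
  assumes "e * cnj e = 1" and "s^2 = 1"
  shows "(cmod (a + s * e * cnj c))^2 + (cmod (c - s * e * cnj a))^2 = 2 * (cmod a)^2 + 2 * (cmod c)^2"
  using assms(1) complex_of_real_power2_eq_1[OF assms(2)]
  by - (rule of_real_eq_iff[where 'a=complex, THEN iffD1], unfold complex_of_real_to_cnj, algebra)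

lemma product_doubling_identity:
  fixes a b c d e :: complex and s t :: real
  assumes "e * cnj e = 1" and "s^2 = 1" and "t^2 = 1"
  shows "(cmod ((a + s * e * cnj c) * (b + t * e * cnj d)))^2 + (cmod ((c - s * e * cnj a) * (d - t * e * cnj b)))^2 =
     2 * (cmod (a*b))^2 + 2 * (cmod (c*d))^2 + 2 * (cmod (a*d))^2 + 2 * (cmod (c*b))^2
     + 4 * s * t * Re (a * c * cnj (b * d)) + 4 * s * t * Re (cnj e ^ 2 * (a * c * b * d))"
  using assms(1) complex_of_real_power2_eq_1[OF assms(2)] complex_of_real_power2_eq_1[OF assms(3)]
  by - (rule of_real_eq_iff[where 'a=complex, THEN iffD1], unfold complex_of_real_to_cnj, algebra)

lemma product_tilde_doubling_identity:
  fixes a b c d e :: complex and s t :: real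
  assumes "e * cnj e = 1" and "s^2 = 1" and "t^2 = 1"
  shows "(cmod ((a + s * e * cnj c) * (d - t * e * cnj b)))^2 + (cmod ((c - s * e * cnj a) * (b + t * e * cnj d)))^2 =
     2 * (cmod (a*b))^2 + 2 * (cmod (c*d))^2 + 2 * (cmod (a*d))^2 + 2 * (cmod (c*b))^2
     - 4 * s * t * Re (a * c * cnj (b * d)) - 4 * s * t * Re (cnj e ^ 2 * (a * c * b * d))"
  using assms(1) complex_of_real_power2_eq_1[OF assms(2)] complex_of_real_power2_eq_1[OF assms(3)]
  by - (rule of_real_eq_iff[where 'a=complex, THEN iffD1], unfold complex_of_real_to_cnj, algebra)

lemma correlation_doubling_identity:
  fixes a b c d e :: complex and s t :: real
  assumes "e * cnj e = 1" and "s^2 = 1" and "t^2 = 1"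
  shows "Re ((a + s * e * cnj c) * (c - s * e * cnj a) * cnj ((b + t * e * cnj d) * (d - t * e * cnj b)))
     + Re ((c - s * e * cnj a) * (a + s * e * cnj c) * cnj ((d - t * e * cnj b) * (b + t * e * cnj d))) =
     2 * s * t * ((cmod (a*b))^2 + (cmod (c*d))^2 - (cmod (a*d))^2 - (cmod (c*b))^2)
     + 4 * Re (a * c * cnj (b * d)) - 4 * Re (cnj e ^ 2 * (a * c * b * d))"
proof -
  have "2 * Re ((a + s * e * cnj c) * (c - s * e * cnj a) * cnj ((b + t * e * cnj d) * (d - t * e * cnj b))) =
     2 * s * t * ((cmod (a*b))^2 + (cmod (c*d))^2 - (cmod (a*d))^2 - (cmod (c*b))^2)
     + 4 * Re (a * c * cnj (b * d)) - 4 * Re (cnj e ^ 2 * (a * c * b * d))"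
    using assms(1) complex_of_real_power2_eq_1[OF assms(2)] complex_of_real_power2_eq_1[OF assms(3)]
    by - (rule of_real_eq_iff[where 'a=complex, THEN iffD1], unfold complex_of_real_to_cnj, algebra)
  then show ?thesis
    by (simp add: mult.commute)
qed

lemma l2norm_doubling_step:
  assumes "s^2 = 1"
  shows "(l2norm (doubling_step s p))^2 = 2 * (l2norm p)^2"
proof (cases "p = 0")
  case True
  then show ?thesis by (simp add: doubling_step_def dagger_def tilde_def l2norm_def)
next
  case False
  then have plen_p: "plen p \<noteq> 0" by (simp add: plen_def)
  have "circle_mean (\<lambda>z. (cmod (poly (doubling_step s p) z))^2) = circle_mean (\<lambda>z. 2 * (cmod (poly p z))^2)"
  proof (rule circle_mean_eqI[where c = 0 and P = 0 and m = 1], goal_cases)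
    case (1 z)
    show ?case
      unfolding poly_doubling_step[OF refl 1] poly_doubling_step_minus[OF refl plen_p 1]
        norm_doubling_identity[OF doubling_factor_mult_cnj[OF 1] assms]
      by simp
  qed (intro continuous_intros | simp)+
  then show ?thesis
    by (simp add: l2norm_power2_eq_circle_mean circle_mean_cmult)
qed

definition tilde_correlation :: "complex poly \<Rightarrow> complex poly \<Rightarrow> real" where
  "tilde_correlation p q = Re (circ_int (\<lambda>z. poly p z * poly (tilde p) z * cnj (poly q z * poly (tilde q) z)))"

lemma tilde_correlation_eq_circle_mean:
  "tilde_correlation p q = circle_mean (\<lambda>z. Re (poly p z * poly p (- z) * cnj (poly q z * poly q (- z))))"
  unfolding tilde_correlation_def
  by (subst Re_circ_int_eq_circle_mean) (intro continuous_intros, simp add: poly_tilde)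

lemma degree_tilde_product_less:
  assumes "plen p = l" "plen q = l" "l \<noteq> 0"
  shows "degree (p * tilde p * q * tilde q) < 4 * l - 2"
proof -
  have "degree (p * tilde p * q * tilde q) \<le> degree p + degree (tilde p) + degree q + degree (tilde q)"
    by (meson add_le_mono degree_mult_le le_trans order_refl)
  then show ?thesis
    using assms degree_eq_plen_minus_1[of p] degree_eq_plen_minus_1[of q] by (simp add: degree_tilde)
qed

context
  fixes p q :: "complex poly" and l :: nat and s t :: real
  assumes plen_p: "plen p = l" and plen_q: "plen q = l" and l: "l \<noteq> 0" and s: "s^2 = 1" and t: "t^2 = 1"
begin

lemma l2norm_mult_doubling_step:
  "(l2norm (doubling_step s p * doubling_step t q))^2 =
    2 * (l2norm (p * q))^2 + 2 * (l2norm (p * tilde q))^2 + 2 * s * t * tilde_correlation p q"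
proof -
  have "(l2norm (doubling_step s p * doubling_step t q))^2 =
      circle_mean (\<lambda>z. (cmod (poly (doubling_step s p * doubling_step t q) z))^2)"
    by (rule l2norm_power2_eq_circle_mean)
  also have "\<dots> = circle_mean (\<lambda>z. 2 * (cmod (poly p z * poly q z))^2
      + 2 * (cmod (poly p z * poly q (- z)))^2
      + (2 * s * t) * Re (poly p z * poly p (- z) * cnj (poly q z * poly q (- z))))"
  proof (rule circle_mean_eqI[where c = "4 * s * t" and P = "p * tilde p * q * tilde q"
        and m = "4 * l - 2"], goal_cases)
    case (1 z)
    show ?case
      unfolding poly_mult minus_minus poly_doubling_step[OF plen_p 1] poly_doubling_step[OF plen_q 1]
        poly_doubling_step_minus[OF plen_p l 1] poly_doubling_step_minus[OF plen_q l 1]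
        product_doubling_identity[OF doubling_factor_mult_cnj[OF 1] s t]
      by (simp add: poly_tilde cnj_doubling_factor_power2[OF l] mult_ac del: times_complex.sel)
  qed (intro continuous_intros | use degree_tilde_product_less[OF plen_p plen_q l] in simp)+
  also have "\<dots> = 2 * (l2norm (p * q))^2 + 2 * (l2norm (p * tilde q))^2 + 2 * s * t * tilde_correlation p q"
    by (subst circle_mean_lincomb3)
      (intro continuous_intros | simp add: l2norm_power2_eq_circle_mean tilde_correlation_eq_circle_mean poly_tilde)+
  finally show ?thesis .
qed

lemma l2norm_mult_tilde_doubling_step:
  "(l2norm (doubling_step s p * tilde (doubling_step t q)))^2 =
    2 * (l2norm (p * q))^2 + 2 * (l2norm (p * tilde q))^2 - 2 * s * t * tilde_correlation p q"
proof -
  have "(l2norm (doubling_step s p * tilde (doubling_step t q)))^2 =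
      circle_mean (\<lambda>z. (cmod (poly (doubling_step s p * tilde (doubling_step t q)) z))^2)"
    by (rule l2norm_power2_eq_circle_mean)
  also have "\<dots> = circle_mean (\<lambda>z. 2 * (cmod (poly p z * poly q z))^2
      + 2 * (cmod (poly p z * poly q (- z)))^2
      + (- 2 * s * t) * Re (poly p z * poly p (- z) * cnj (poly q z * poly q (- z))))"
  proof (rule circle_mean_eqI[where c = "- 4 * s * t" and P = "p * tilde p * q * tilde q"
        and m = "4 * l - 2"], goal_cases)
    case (1 z)
    show ?case
      unfolding poly_mult poly_tilde minus_minus poly_doubling_step[OF plen_p 1] poly_doubling_step[OF plen_q 1]
        poly_doubling_step_minus[OF plen_p l 1] poly_doubling_step_minus[OF plen_q l 1]
        product_tilde_doubling_identity[OF doubling_factor_mult_cnj[OF 1] s t]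
      by (simp add: cnj_doubling_factor_power2[OF l] mult_ac del: times_complex.sel)
  qed (intro continuous_intros | use degree_tilde_product_less[OF plen_p plen_q l] in simp)+
  also have "\<dots> = 2 * (l2norm (p * q))^2 + 2 * (l2norm (p * tilde q))^2 - 2 * s * t * tilde_correlation p q"
    by (subst circle_mean_lincomb3)
      (intro continuous_intros | simp add: l2norm_power2_eq_circle_mean tilde_correlation_eq_circle_mean poly_tilde)+
  finally show ?thesis .
qed

lemma tilde_correlation_doubling_step:
  "tilde_correlation (doubling_step s p) (doubling_step t q) =
    2 * s * t * (l2norm (p * q))^2 - 2 * s * t * (l2norm (p * tilde q))^2 + 2 * tilde_correlation p q"
proof -
  have "tilde_correlation (doubling_step s p) (doubling_step t q) =
      circle_mean (\<lambda>z. Re (poly (doubling_step s p) z * poly (doubling_step s p) (- z)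
        * cnj (poly (doubling_step t q) z * poly (doubling_step t q) (- z))))"
    by (rule tilde_correlation_eq_circle_mean)
  also have "\<dots> = circle_mean (\<lambda>z. (2 * s * t) * (cmod (poly p z * poly q z))^2
      + (- 2 * s * t) * (cmod (poly p z * poly q (- z)))^2
      + 2 * Re (poly p z * poly p (- z) * cnj (poly q z * poly q (- z))))"
  proof (rule circle_mean_eqI[where c = "- 4" and P = "p * tilde p * q * tilde q" and m = "4 * l - 2"],
      goal_cases)
    case (1 z)
    show ?case
      unfolding minus_minus poly_doubling_step[OF plen_p 1] poly_doubling_step[OF plen_q 1]
        poly_doubling_step_minus[OF plen_p l 1] poly_doubling_step_minus[OF plen_q l 1]
        correlation_doubling_identity[OF doubling_factor_mult_cnj[OF 1] s t]
      by (simp add: poly_tilde cnj_doubling_factor_power2[OF l] algebra_simps del: times_complex.sel)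
  qed (intro continuous_intros | use degree_tilde_product_less[OF plen_p plen_q l] in simp)+
  also have "\<dots> = 2 * s * t * (l2norm (p * q))^2 - 2 * s * t * (l2norm (p * tilde q))^2 + 2 * tilde_correlation p q"
    by (subst circle_mean_lincomb3)
      (intro continuous_intros | simp add: l2norm_power2_eq_circle_mean tilde_correlation_eq_circle_mean poly_tilde)+
  finally show ?thesis .
qed

end

theorem lemma2p3:
  fixes f g :: "nat \<Rightarrow> complex poly" and \<sigma> \<tau> :: "nat \<Rightarrow> real"
    and n l :: nat
  assumes "plen (f n) = l" and "plen (g n) = l"
    and "\<sigma> n \<in> {-1, 1}" and "\<tau> n \<in> {-1, 1}"
    and "f (Suc n) = f n + smult (complex_of_real (\<sigma> n)) (monom 1 l * tilde (dagger (f n)))"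
    and "g (Suc n) = g n + smult (complex_of_real (\<tau> n)) (monom 1 l * tilde (dagger (g n)))"
  defines "u \<equiv> \<lambda>j. (l2norm (f j * g j))^2"
    and "v \<equiv> \<lambda>j. (l2norm (f j * tilde (g j)))^2"
    and "w \<equiv> \<lambda>j. Re (circ_int (\<lambda>z. poly (f j) z * poly (tilde (f j)) z
                                   * cnj (poly (g j) z * poly (tilde (g j)) z)))"
  shows "(l2norm (f (Suc n)))^2 = 2 * (l2norm (f n))^2 \<and>
         (l2norm (g (Suc n)))^2 = 2 * (l2norm (g n))^2 \<and>
         u (Suc n) = 2 * u n + 2 * v n + 2 * \<sigma> n * \<tau> n * w n \<and>
         v (Suc n) = 2 * u n + 2 * v n - 2 * \<sigma> n * \<tau> n * w n \<and>
         w (Suc n) = 2 * \<sigma> n * \<tau> n * u n - 2 * \<sigma> n * \<tau> n * v n + 2 * w n"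
proof -
  have \<sigma>: "(\<sigma> n)^2 = 1" and \<tau>: "(\<tau> n)^2 = 1"
    using assms(3,4) by auto
  have f_step: "f (Suc n) = doubling_step (\<sigma> n) (f n)"
    and g_step: "g (Suc n) = doubling_step (\<tau> n) (g n)"
    using assms(1,2,5,6) by (simp_all add: doubling_step_def)
  have w_eq: "w = (\<lambda>j. tilde_correlation (f j) (g j))"
    unfolding w_def tilde_correlation_def ..
  show ?thesis
  proof (cases "l = 0")
    case True
    then have "f n = 0" "g n = 0"
      using assms(1,2) by (simp_all add: plen_def)
    then show ?thesis
      unfolding u_def v_def w_eq f_step g_step
      by (simp add: doubling_step_def dagger_def tilde_def tilde_correlation_def l2norm_def circ_int_def)
  next
    case False
    show ?thesis
      unfolding u_def v_def w_eq f_step g_step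
      using l2norm_doubling_step[OF \<sigma>] l2norm_doubling_step[OF \<tau>]
        l2norm_mult_doubling_step[OF assms(1,2) False \<sigma> \<tau>]
        l2norm_mult_tilde_doubling_step[OF assms(1,2) False \<sigma> \<tau>]
        tilde_correlation_doubling_step[OF assms(1,2) False \<sigma> \<tau>]
      by simp
  qed
qed

end
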